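(* Let $\mathcal{G}$ be a directed acyclic graph over variables $\mathbf{V}=\mathbf{O}\cup\mathbf{L}$ (observed and latent), let $X\in\mathbf{O}$ and let $Y$ be a variable of $\mathcal{G}$, and let $\Pi$ be the policy space with policy inputs $\mathbf{Pa}^\Pi\subseteq\mathbf{O}\setminus\mathbf{De}(X)$. If there exists a $\pi$-backdoor admissible set with respect to $\langle\mathcal{G},\Pi\rangle$, then $\mathbf{Z}=\mathbf{An}(\{X,Y\})\cap\mathbf{Pa}^\Pi$ is a $\pi$-backdoor admissible set with respect to $\langle\mathcal{G},\Pi\rangle$.
   Context: $\mathbf{An}(\cdot)$ and $\mathbf{De}(\cdot)$ denote ancestors and descendants in $\mathcal{G}$. A policy is a stochastic mapping $\pi(X\mid\mathbf{Pa}^\Pi)$ from values of $\mathbf{Pa}^\Pi$ to distributions over $X$; the policy space $\Pi$ is the set of all such mappings. $\mathcal{G}_{\underline{X}}$ denotes the graph obtained from $\mathcal{G}$ by removing all edges outgoing from $X$. A set $\mathbf{Z}$ is $\pi$-backdoor admissible w.r.t. $\langle\mathcal{G},\Pi\rangle$ iff $\mathbf{Z}\subseteq\mathbf{Pa}^\Pi$ and $Y$ is d-separated from $X$ by $\mathbf{Z}$ in $\mathcal{G}_{\underline{X}}$. *)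

theory Defs
  imports Main
begin

text \<open>A causal graph is given by a finite vertex set V and a directed edge
relation E \<subseteq> V \<times> V; (a,b) \<in> E means a \<rightarrow> b.\<close>

definition is_dag :: "'v set \<Rightarrow> ('v \<times> 'v) set \<Rightarrow> bool" where
  "is_dag V E \<longleftrightarrow> finite V \<and> E \<subseteq> V \<times> V \<and> acyclic E"

definition An :: "'v set \<Rightarrow> ('v \<times> 'v) set \<Rightarrow> 'v set \<Rightarrow> 'v set" where
  "An V E S = {a \<in> V. \<exists>s\<in>S. (a, s) \<in> E\<^sup>*}"

definition De :: "'v set \<Rightarrow> ('v \<times> 'v) set \<Rightarrow> 'v set \<Rightarrow> 'v set" where
  "De V E S = {d \<in> V. \<exists>s\<in>S. (s, d) \<in> E\<^sup>*}"

definition remove_out :: "('v \<times> 'v) set \<Rightarrow> 'v \<Rightarrow> ('v \<times> 'v) set" where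
  "remove_out E X = {(a, b) \<in> E. a \<noteq> X}"

definition is_path :: "('v \<times> 'v) set \<Rightarrow> 'v list \<Rightarrow> 'v \<Rightarrow> 'v \<Rightarrow> bool" where
  "is_path E p a b \<longleftrightarrow> length p \<ge> 2 \<and> distinct p \<and> hd p = a \<and> last p = b \<and>
     (\<forall>i. Suc i < length p \<longrightarrow> ((p ! i, p ! Suc i) \<in> E \<or> (p ! Suc i, p ! i) \<in> E))"

definition collider :: "('v \<times> 'v) set \<Rightarrow> 'v list \<Rightarrow> nat \<Rightarrow> bool" where
  "collider E p i \<longleftrightarrow> (p ! (i - 1), p ! i) \<in> E \<and> (p ! Suc i, p ! i) \<in> E"

definition active_path :: "'v set \<Rightarrow> ('v \<times> 'v) set \<Rightarrow> 'v set \<Rightarrow> 'v list \<Rightarrow> bool" where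
  "active_path V E Z p \<longleftrightarrow>
     (\<forall>i. 0 < i \<and> Suc i < length p \<longrightarrow>
        (collider E p i \<longrightarrow> p ! i \<in> An V E Z) \<and>
        (\<not> collider E p i \<longrightarrow> p ! i \<notin> Z))"

definition d_separated :: "'v set \<Rightarrow> ('v \<times> 'v) set \<Rightarrow> 'v \<Rightarrow> 'v \<Rightarrow> 'v set \<Rightarrow> bool" where
  "d_separated V E Y X Z \<longleftrightarrow> \<not> (\<exists>p. is_path E p X Y \<and> active_path V E Z p)"

text \<open>\<pi>-backdoor admissibility w.r.t. \<langle>G,\<Pi>\<rangle>; the policy space \<Pi> enters only
through its input set Pa (= Pa^\<Pi>).\<close>
definition pi_backdoor_admissible ::
  "'v set \<Rightarrow> ('v \<times> 'v) set \<Rightarrow> 'v set \<Rightarrow> 'v \<Rightarrow> 'v \<Rightarrow> 'v set \<Rightarrow> bool" where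
  "pi_backdoor_admissible V E Pa X Y Z \<longleftrightarrow>
     Z \<subseteq> Pa \<and> d_separated V (remove_out E X) Y X Z"

end

(* Work in the graph without the edges out of X, where ancestors of {X, Y} are the same as in
   the original graph.
   Let Z \<subseteq> W separate X from Y and let p be a path from X to Y active given
   Z0 = An {X, Y} \<inter> W. Every collider of p is an ancestor of Z0, hence of X or Y. A
   non-collider b has an outgoing edge along p; following p in that direction reaches an endpoint
   or a collider, so b is an ancestor of X or Y too, and b \<in> Z would force b \<in> Z0. So p is
   active given Z except at colliders that are ancestors of an endpoint but not of Z. Each of
   them is bypassed by a directed path to that endpoint, which avoids Z and has no colliders.
   Shortcutting repeated vertices of the resulting walk gives a path active given Z. *)

theory Submission
  imports Defs
begin

fun triples :: "'a list \<Rightarrow> ('a \<times> 'a \<times> 'a) list" where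
  "triples (a # b # c # r) = (a, b, c) # triples (b # c # r)"
| "triples _ = []"

lemma triples_conv_nth: "triples w = map (\<lambda>i. (w!i, w!Suc i, w!Suc (Suc i))) [0..<length w - 2]"
proof (induction w rule: triples.induct)
  case (1 a b c r)
  have "[0..<length (a#b#c#r) - 2] = 0 # map Suc [0..<length (b#c#r) - 2]"
    by (simp add: upt_conv_Cons map_Suc_upt del: upt_Suc)
  then show ?case using 1 by simp
qed auto

lemma set_triples_iff:
  "t \<in> set (triples w) \<longleftrightarrow> (\<exists>i. Suc (Suc i) < length w \<and> t = (w!i, w!Suc i, w!Suc (Suc i)))"
  by (auto simp: triples_conv_nth) (metis less_diff_conv add_2_eq_Suc')

lemma triples_append: "triples (xs @ [a, b] @ ys) = triples (xs @ [a, b]) @ triples ([a, b] @ ys)"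
  by (induction xs rule: triples.induct) (cases ys; simp)+

lemma set_triples_append_left: "set (triples xs) \<subseteq> set (triples (xs @ ys))"
  by (induction xs rule: triples.induct) auto

lemma set_triples_append_right: "set (triples ys) \<subseteq> set (triples (xs @ ys))"
proof (induction xs)
  case (Cons x xs)
  have "set (triples w) \<subseteq> set (triples (x # w))" for w
    by (cases w rule: triples.cases) auto
  from this[of "xs @ ys"] Cons.IH show ?case by simp
qed simp

lemma in_set_triples_decomp: "(a, b, c) \<in> set (triples w) \<Longrightarrow> \<exists>xs ys. w = xs @ [a, b, c] @ ys"
proof (induction w rule: triples.induct)
  case (1 x y z r)
  show ?case
  proof (cases "(a, b, c) = (x, y, z)")
    case True
    then show ?thesis by (intro exI[of _ "[]"] exI[of _ r]) auto
  next
    case False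
    then have "(a, b, c) \<in> set (triples (y # z # r))" using 1(2) False by auto
    then obtain xs ys where "y # z # r = xs @ [a, b, c] @ ys" using 1(1) by blast
    then show ?thesis by (intro exI[of _ "x # xs"] exI[of _ ys]) auto
  qed
qed auto

lemma in_set_triples_middle: "(a, b, c) \<in> set (triples (xs @ [a, b, c] @ ys))"
  using set_triples_append_right[of "[a, b, c] @ ys" xs] by auto

lemma triples_rev: "triples (rev w) = rev (map (\<lambda>(a, b, c). (c, b, a)) (triples w))"
proof (rule nth_equalityI)
  show "length (triples (rev w)) = length (rev (map (\<lambda>(a, b, c). (c, b, a)) (triples w)))"
    by (simp add: triples_conv_nth)
next
  fix i assume "i < length (triples (rev w))"
  then have "i < length w - 2" by (simp add: triples_conv_nth)
  then show "triples (rev w) ! i = rev (map (\<lambda>(a, b, c). (c, b, a)) (triples w)) ! i"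
    by (simp add: triples_conv_nth rev_nth Suc_diff_Suc numeral_2_eq_2)
qed

definition adjacent :: "('a \<times> 'a) set \<Rightarrow> 'a \<Rightarrow> 'a \<Rightarrow> bool" where
  "adjacent R x y \<longleftrightarrow> (x, y) \<in> R \<or> (y, x) \<in> R"

lemma successively_adjacent_rev [simp]:
  "successively (adjacent R) (rev w) \<longleftrightarrow> successively (adjacent R) w"
proof -
  have "(\<lambda>x y. adjacent R y x) = adjacent R" by (auto simp: adjacent_def fun_eq_iff)
  then show ?thesis by (simp only: successively_rev)
qed

text \<open>Colliders must lie in A and non-colliders outside Z; an active path given Z has
  A = An Z, the intermediate walks of the proof a larger A.\<close>
fun active_triple :: "('a \<times> 'a) set \<Rightarrow> 'a set \<Rightarrow> 'a set \<Rightarrow> 'a \<times> 'a \<times> 'a \<Rightarrow> bool" where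
  "active_triple R A Z (a, b, c) \<longleftrightarrow> (if (a, b) \<in> R \<and> (c, b) \<in> R then b \<in> A else b \<notin> Z)"

definition active_walk :: "('a \<times> 'a) set \<Rightarrow> 'a set \<Rightarrow> 'a set \<Rightarrow> 'a list \<Rightarrow> bool" where
  "active_walk R A Z w \<longleftrightarrow>
     successively (adjacent R) w \<and> (\<forall>t\<in>set (triples w). active_triple R A Z t)"

lemma active_walk_appendD:
  assumes "active_walk R A Z (xs @ ys)"
  shows "active_walk R A Z xs" "active_walk R A Z ys"
  using assms set_triples_append_left[of xs ys] set_triples_append_right[of ys xs]
  by (auto simp: active_walk_def successively_append_iff)

lemma active_walk_rev [simp]: "active_walk R A Z (rev w) \<longleftrightarrow> active_walk R A Z w"
proof -
  have "active_triple R A Z \<circ> (\<lambda>(a, b, c). (c, b, a)) = active_triple R A Z"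
    by (auto simp: fun_eq_iff)
  then have "(\<forall>t\<in>set (triples (rev w)). active_triple R A Z t) \<longleftrightarrow>
             (\<forall>t\<in>set (triples w). active_triple R A Z t)"
    by (simp add: triples_rev) (metis comp_apply)
  then show ?thesis by (simp add: active_walk_def del: successively_rev)
qed

lemma active_walk_triple_adjacent:
  assumes "active_walk R A Z w" "(a, b, c) \<in> set (triples w)"
  shows "adjacent R a b" "adjacent R b c"
proof -
  obtain xs ys where "w = xs @ [a, b, c] @ ys" using in_set_triples_decomp[OF assms(2)] by blast
  then have "active_walk R A Z ([a, b, c] @ ys)"
    using assms(1) active_walk_appendD(2)[of R A Z xs "[a, b, c] @ ys"] by simp
  then have "active_walk R A Z [a, b, c]" by (rule active_walk_appendD(1))
  then show "adjacent R a b" "adjacent R b c" by (auto simp: active_walk_def)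
qed

lemma is_path_active_path_iff:
  "is_path R p a b \<and> active_path V R Z p \<longleftrightarrow>
     2 \<le> length p \<and> distinct p \<and> hd p = a \<and> last p = b \<and> active_walk R (An V R Z) Z p"
proof -
  have "active_path V R Z p \<longleftrightarrow> (\<forall>t\<in>set (triples p). active_triple R (An V R Z) Z t)"
  proof
    assume act: "active_path V R Z p"
    show "\<forall>t\<in>set (triples p). active_triple R (An V R Z) Z t"
    proof
      fix t assume "t \<in> set (triples p)"
      then obtain i where i: "Suc (Suc i) < length p" "t = (p!i, p!Suc i, p!Suc (Suc i))"
        by (auto simp: set_triples_iff)
      then show "active_triple R (An V R Z) Z t"
        using act[unfolded active_path_def, rule_format, of "Suc i"] by (auto simp: collider_def)
    qed
  next
    assume act: "\<forall>t\<in>set (triples p). active_triple R (An V R Z) Z t"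
    show "active_path V R Z p" unfolding active_path_def
    proof (intro allI impI)
      fix i assume i: "0 < i \<and> Suc i < length p"
      then obtain j where j: "i = Suc j" by (cases i) auto
      have "(p!j, p!i, p!Suc i) \<in> set (triples p)" using i j by (auto simp: set_triples_iff)
      then show "(collider R p i \<longrightarrow> p ! i \<in> An V R Z) \<and> (\<not> collider R p i \<longrightarrow> p ! i \<notin> Z)"
        using act j by (auto simp: collider_def split: if_splits)
    qed
  qed
  moreover have "is_path R p a b \<longleftrightarrow>
      2 \<le> length p \<and> distinct p \<and> hd p = a \<and> last p = b \<and> successively (adjacent R) p"
    by (simp add: is_path_def successively_conv_nth adjacent_def)
  ultimately show ?thesis by (auto simp: active_walk_def)
qed

lemma active_walk_append_overlap:
  assumes "active_walk R A Z (xs @ [a, b])" "active_walk R A Z ([a, b] @ ys)"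
  shows "active_walk R A Z (xs @ [a, b] @ ys)"
  using assms unfolding active_walk_def triples_append by (auto simp: successively_append_iff)

lemma active_walk_forward_reach:
  assumes "active_walk R A Z (u # v # w)" "(u, v) \<in> R"
  shows "(u, last (v # w)) \<in> R\<^sup>* \<or> (\<exists>s\<in>A. (u, s) \<in> R\<^sup>*)"
  using assms
proof (induction w arbitrary: u v)
  case (Cons x w)
  show ?case
  proof (cases "(x, v) \<in> R")
    case True
    then have "v \<in> A" using Cons.prems by (auto simp: active_walk_def)
    then show ?thesis using Cons.prems(2) by blast
  next
    case False
    then have "(v, x) \<in> R" using Cons.prems(1) by (auto simp: active_walk_def adjacent_def)
    moreover have "active_walk R A Z (v # x # w)"
      using Cons.prems(1) active_walk_appendD(2)[of R A Z "[u]" "v # x # w"] by simp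
    ultimately have "(v, last (x # w)) \<in> R\<^sup>* \<or> (\<exists>s\<in>A. (v, s) \<in> R\<^sup>*)" using Cons.IH by blast
    then show ?thesis using Cons.prems(2) by (auto intro: converse_rtrancl_into_rtrancl)
  qed
qed auto

lemma active_walk_noncollider_reach:
  assumes "active_walk R A Z w" "(a, b, c) \<in> set (triples w)" "\<not> ((a, b) \<in> R \<and> (c, b) \<in> R)"
  shows "(b, hd w) \<in> R\<^sup>* \<or> (b, last w) \<in> R\<^sup>* \<or> (\<exists>s\<in>A. (b, s) \<in> R\<^sup>*)"
proof -
  obtain xs ys where w: "w = xs @ [a, b, c] @ ys" using in_set_triples_decomp[OF assms(2)] by blast
  have "(b, c) \<in> R \<or> (b, a) \<in> R"
    using active_walk_triple_adjacent[OF assms(1,2)] assms(3) by (auto simp: adjacent_def)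
  then show ?thesis
  proof
    assume "(b, c) \<in> R"
    moreover have "active_walk R A Z (b # c # ys)"
      using assms(1) active_walk_appendD(2)[of R A Z "xs @ [a]" "b # c # ys"] w by simp
    ultimately show ?thesis using active_walk_forward_reach w by fastforce
  next
    assume "(b, a) \<in> R"
    moreover have "active_walk R A Z (b # a # rev xs)"
      using assms(1) active_walk_appendD(2)[of R A Z "rev ys @ [c]" "b # a # rev xs"]
        active_walk_rev[of R A Z w] w
      by simp
    moreover have "last (a # rev xs) = hd w" using w by (cases xs) auto
    ultimately show ?thesis using active_walk_forward_reach by metis
  qed
qed

lemma acyclic_back_edge: "acyclic R \<Longrightarrow> (x, y) \<in> R\<^sup>* \<Longrightarrow> (y, x) \<notin> R"
  by (metis acyclic_def rtrancl_into_trancl2)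

lemma rtrancl_directed_walk:
  "(c, t) \<in> R\<^sup>* \<Longrightarrow> \<exists>d. d \<noteq> [] \<and> hd d = c \<and> last d = t \<and>
     successively (\<lambda>x y. (x, y) \<in> R) d \<and> (\<forall>y\<in>set d. (c, y) \<in> R\<^sup>*)"
proof (induction rule: rtrancl_induct)
  case base
  then show ?case by (intro exI[of _ "[c]"]) auto
next
  case (step y z)
  then obtain d where "d \<noteq> []" "hd d = c" "last d = y" "successively (\<lambda>x y. (x, y) \<in> R) d"
    "\<forall>y\<in>set d. (c, y) \<in> R\<^sup>*"
    by blast
  then show ?case using step by (intro exI[of _ "d @ [z]"]) (auto simp: successively_append_iff)
qed

lemma triples_Cons_directed:
  assumes "successively (\<lambda>x y. (x, y) \<in> R) d" "(x, y, z) \<in> set (triples (a # d))"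
  shows "(y, z) \<in> R" "y \<in> set d"
proof -
  obtain i where "Suc (Suc i) < length (a # d)"
    "(x, y, z) = ((a # d) ! i, (a # d) ! Suc i, (a # d) ! Suc (Suc i))"
    using assms(2) by (auto simp: set_triples_iff)
  then have "y = d ! i" "z = d ! Suc i" "Suc i < length d" by auto
  then show "(y, z) \<in> R" "y \<in> set d" using assms(1) by (auto simp: successively_conv_nth)
qed

fun blocked_collider :: "('a \<times> 'a) set \<Rightarrow> 'a set \<Rightarrow> 'a \<times> 'a \<times> 'a \<Rightarrow> bool" where
  "blocked_collider R A (a, b, c) \<longleftrightarrow> (a, b) \<in> R \<and> (c, b) \<in> R \<and> b \<notin> A"

definition count_blocked_colliders :: "('a \<times> 'a) set \<Rightarrow> 'a set \<Rightarrow> 'a list \<Rightarrow> nat" where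
  "count_blocked_colliders R A w = length (filter (blocked_collider R A) (triples w))"

lemma count_blocked_colliders_rev [simp]:
  "count_blocked_colliders R A (rev w) = count_blocked_colliders R A w"
proof -
  have "blocked_collider R A \<circ> (\<lambda>(a, b, c). (c, b, a)) = blocked_collider R A"
    by (auto simp: fun_eq_iff)
  then show ?thesis
    by (simp add: count_blocked_colliders_def triples_rev rev_filter[symmetric] filter_map)
qed

text \<open>The directed path from the collider c to the end of the walk has neither colliders
  (by acyclicity) nor vertices of Z (as c is no ancestor of Z).\<close>
lemma active_walk_bypass_collider:
  assumes acy: "acyclic R" and act: "active_walk R A Z w" and w: "w = xs @ [a, c, b] @ ys"
    and ac: "(a, c) \<in> R" and bc: "(b, c) \<in> R" and cB: "c \<notin> B"
    and c_last: "(c, last w) \<in> R\<^sup>*" and c_Z: "\<forall>y. (c, y) \<in> R\<^sup>* \<longrightarrow> y \<notin> Z"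
  obtains w' where "active_walk R A Z w'" "w' \<noteq> []" "hd w' = hd w" "last w' = last w"
    "count_blocked_colliders R B w' < count_blocked_colliders R B w"
proof -
  obtain d where d: "d \<noteq> []" "hd d = c" "last d = last w" "successively (\<lambda>x y. (x, y) \<in> R) d"
    "\<forall>y\<in>set d. (c, y) \<in> R\<^sup>*"
    using rtrancl_directed_walk[OF c_last] by blast
  then obtain d' where dd: "d = c # d'" by (cases d) auto
  have d_triples: "active_triple R A Z t \<and> \<not> blocked_collider R B t" if "t \<in> set (triples (a # d))" for t
  proof -
    obtain x y z where xyz: "t = (x, y, z)" by (cases t)
    have "(y, z) \<in> R" "y \<in> set d" using triples_Cons_directed[OF d(4)] that xyz by auto
    then have "(z, y) \<notin> R" "y \<notin> Z" using acyclic_back_edge[OF acy] c_Z d(5) by auto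
    then show ?thesis by (simp add: xyz)
  qed
  have prefix: "active_walk R A Z (xs @ [a, c])"
    using act active_walk_appendD(1)[of R A Z "xs @ [a, c]" "b # ys"] w by simp
  have "successively (adjacent R) d"
    using d(4) by (rule successively_mono) (auto simp: adjacent_def)
  then have "active_walk R A Z ([a, c] @ d')"
    using d_triples ac by (auto simp: active_walk_def dd adjacent_def)
  with prefix have "active_walk R A Z (xs @ [a, c] @ d')" by (rule active_walk_append_overlap)
  moreover have "count_blocked_colliders R B (xs @ [a, c] @ d') < count_blocked_colliders R B w"
  proof -
    have w': "w = xs @ [a, c] @ b # ys" by (simp add: w)
    show ?thesis
      using d_triples ac bc cB unfolding w' dd count_blocked_colliders_def triples_append
      by (simp add: filter_empty_conv)
  qed
  moreover have "hd (xs @ [a, c] @ d') = hd w" by (cases xs) (simp_all add: w)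
  moreover have "last (xs @ [a, c] @ d') = last w" using d(3) by (simp add: dd last_append)
  ultimately show thesis using that by blast
qed

text \<open>Induction on the number of colliders outside An Z: each of them is an ancestor of an
  endpoint and is bypassed by a directed path to that endpoint.\<close>
lemma active_walk_reroute_colliders:
  assumes acy: "acyclic R" and RV: "R \<subseteq> V \<times> V"
  shows "active_walk R (An V R (Z \<union> {hd w, last w})) Z w \<Longrightarrow> w \<noteq> [] \<Longrightarrow>
    \<exists>w'. active_walk R (An V R Z) Z w' \<and> w' \<noteq> [] \<and> hd w' = hd w \<and> last w' = last w"
proof (induction "count_blocked_colliders R (An V R Z) w" arbitrary: w rule: less_induct)
  case less
  let ?A = "An V R (Z \<union> {hd w, last w})"
  show ?case
  proof (cases "count_blocked_colliders R (An V R Z) w = 0")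
    case True
    have "active_triple R (An V R Z) Z t" if t: "t \<in> set (triples w)" for t
    proof -
      have "active_triple R ?A Z t" using less.prems(1) t by (simp add: active_walk_def)
      moreover have "\<not> blocked_collider R (An V R Z) t"
        using True t by (simp add: count_blocked_colliders_def filter_empty_conv)
      ultimately show ?thesis by (cases t) (auto split: if_splits)
    qed
    then have "active_walk R (An V R Z) Z w" using less.prems(1) by (simp add: active_walk_def)
    then show ?thesis using less.prems(2) by blast
  next
    case False
    then obtain a c b where t: "(a, c, b) \<in> set (triples w)" "blocked_collider R (An V R Z) (a, c, b)"
      by (auto simp: count_blocked_colliders_def filter_empty_conv)
    obtain xs ys where w: "w = xs @ [a, c, b] @ ys" using in_set_triples_decomp[OF t(1)] by blast
    have ac: "(a, c) \<in> R" and bc: "(b, c) \<in> R" and c_An: "c \<notin> An V R Z" using t(2) by auto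
    have "active_triple R ?A Z (a, c, b)" using less.prems(1) t(1) unfolding active_walk_def by blast
    then have "c \<in> ?A" using ac bc by simp
    then have c_end: "(c, hd w) \<in> R\<^sup>* \<or> (c, last w) \<in> R\<^sup>*" using c_An by (auto simp: An_def)
    have c_Z: "\<forall>y. (c, y) \<in> R\<^sup>* \<longrightarrow> y \<notin> Z" using c_An ac RV by (auto simp: An_def)
    obtain w' where w': "active_walk R ?A Z w'" "w' \<noteq> []" "hd w' = hd w" "last w' = last w"
      "count_blocked_colliders R (An V R Z) w' < count_blocked_colliders R (An V R Z) w"
    proof (cases "(c, last w) \<in> R\<^sup>*")
      case True
      show thesis
        by (rule active_walk_bypass_collider[OF acy less.prems(1) w ac bc c_An True c_Z that])
    next
      case False
      have rev_w: "rev w = rev ys @ [b, c, a] @ rev xs" by (simp add: w)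
      have c_last: "(c, last (rev w)) \<in> R\<^sup>*" using False c_end less.prems(2) by (simp add: last_rev)
      have act_rev: "active_walk R ?A Z (rev w)" using less.prems(1) by simp
      obtain w'' where "active_walk R ?A Z w''" "w'' \<noteq> []" "hd w'' = hd (rev w)"
        "last w'' = last (rev w)"
        "count_blocked_colliders R (An V R Z) w'' < count_blocked_colliders R (An V R Z) (rev w)"
        by (rule active_walk_bypass_collider[OF acy act_rev rev_w bc ac c_An c_last c_Z])
      then show thesis using that[of "rev w''"] less.prems(2) by (simp add: hd_rev last_rev)
    qed
    from less.hyps[OF w'(5)] w'(1-4) show ?thesis by simp
  qed
qed

text \<open>Cutting out the closed subwalk between two visits of v keeps the walk active: if the new
  triple at v is a collider but the one where the closed walk leaves v is not, then following the
  closed walk forward from v ends either in a collider, an ancestor of Z, or back at v, which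
  acyclicity excludes.\<close>
lemma active_walk_shortcut_triple:
  assumes acy: "acyclic R" and RV: "R \<subseteq> V \<times> V" and act: "active_walk R (An V R Z) Z w"
    and w: "w = xs @ [a, v] @ ys @ [v, b] @ zs"
  shows "active_triple R (An V R Z) Z (a, v, b)"
proof -
  obtain n r where nr: "ys @ [v] = n # r" by (cases "ys @ [v]") auto
  obtain r' p where rp: "v # ys = r' @ [p]" by (metis append_butlast_last_id list.distinct(1))
  have "w = xs @ [a, v, n] @ r @ b # zs" using w nr by simp
  then have t1: "(a, v, n) \<in> set (triples w)" by (simp only: in_set_triples_middle)
  have "w = (xs @ [a] @ r') @ [p, v, b] @ zs" using w rp by simp
  then have t2: "(p, v, b) \<in> set (triples w)" by (simp only: in_set_triples_middle)
  have "active_triple R (An V R Z) Z (a, v, n)" "active_triple R (An V R Z) Z (p, v, b)"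
    using act t1 t2 unfolding active_walk_def by blast+
  show ?thesis
  proof (cases "(a, v) \<in> R \<and> (b, v) \<in> R")
    case collider: True
    have "v \<in> V" using collider RV by blast
    have "v \<in> An V R Z"
    proof (cases "(n, v) \<in> R")
      case True
      then show ?thesis using \<open>active_triple R (An V R Z) Z (a, v, n)\<close> collider by simp
    next
      case False
      then have "(v, n) \<in> R" using active_walk_triple_adjacent(2)[OF act t1] by (auto simp: adjacent_def)
      moreover have "active_walk R (An V R Z) Z (v # n # r @ [b])"
      proof -
        have "w = (xs @ [a]) @ (v # n # r @ [b]) @ zs" using w nr by simp
        then show ?thesis using act active_walk_appendD by metis
      qed
      ultimately have "(v, b) \<in> R\<^sup>* \<or> (\<exists>s\<in>An V R Z. (v, s) \<in> R\<^sup>*)"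
        using active_walk_forward_reach by fastforce
      then show ?thesis
        using acyclic_back_edge[OF acy] collider \<open>v \<in> V\<close> by (auto simp: An_def intro: rtrancl_trans)
    qed
    then show ?thesis using collider by simp
  next
    case False
    then show ?thesis
      using \<open>active_triple R (An V R Z) Z (a, v, n)\<close> \<open>active_triple R (An V R Z) Z (p, v, b)\<close>
      by (auto split: if_splits)
  qed
qed

lemma active_walk_shorten_to_distinct:
  assumes acy: "acyclic R" and RV: "R \<subseteq> V \<times> V"
  shows "active_walk R (An V R Z) Z w \<Longrightarrow> w \<noteq> [] \<Longrightarrow>
    \<exists>q. distinct q \<and> active_walk R (An V R Z) Z q \<and> q \<noteq> [] \<and> hd q = hd w \<and> last q = last w"
proof (induction "length w" arbitrary: w rule: less_induct)
  case less
  show ?case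
  proof (cases "distinct w")
    case True
    then show ?thesis using less.prems by blast
  next
    case False
    then obtain xs ys zs v where w: "w = xs @ [v] @ ys @ [v] @ zs" using not_distinct_decomp by blast
    define w' where "w' = xs @ [v] @ zs"
    have "active_walk R (An V R Z) Z w'"
    proof (cases "xs = [] \<or> zs = []")
      case True
      then show ?thesis
        using less.prems(1) active_walk_appendD[of R _ Z "xs @ [v] @ ys" "v # zs"]
          active_walk_appendD[of R _ Z "xs @ [v]" "ys @ [v] @ zs"]
        by (auto simp: w w'_def)
    next
      case False
      then obtain xs' a b zs' where xs: "xs = xs' @ [a]" and zs: "zs = b # zs'"
        by (metis neq_Nil_conv rev_exhaust)
      have w2: "w = xs' @ [a, v] @ ys @ [v, b] @ zs'" by (simp add: w xs zs)
      have prefix: "active_walk R (An V R Z) Z (xs' @ [a, v])"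
        and suffix: "active_walk R (An V R Z) Z ([v, b] @ zs')"
        using less.prems(1) active_walk_appendD[of R _ Z "xs' @ [a, v]" "ys @ [v, b] @ zs'"]
          active_walk_appendD[of R _ Z "xs' @ [a, v] @ ys" "[v, b] @ zs'"]
        by (simp_all add: w2)
      have "adjacent R a v" using prefix by (simp add: active_walk_def successively_append_iff)
      moreover have "adjacent R v b" using suffix by (simp add: active_walk_def)
      moreover have "active_triple R (An V R Z) Z (a, v, b)"
        using active_walk_shortcut_triple[OF acy RV less.prems(1) w2] .
      ultimately have avb: "active_walk R (An V R Z) Z ([a] @ [v, b])" by (simp add: active_walk_def)
      have "active_walk R (An V R Z) Z ([a, v] @ b # zs')"
        using active_walk_append_overlap[OF avb suffix] by simp
      from active_walk_append_overlap[OF prefix this] show ?thesis by (simp add: w'_def xs zs)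
    qed
    moreover have "length w' < length w" "w' \<noteq> []" "hd w' = hd w" "last w' = last w"
      by (auto simp: w w'_def hd_append)
    ultimately show ?thesis using less.hyps by metis
  qed
qed

lemma active_walk_An_endpoints_Int:
  assumes RV: "R \<subseteq> V \<times> V" and "Z \<subseteq> W"
    and act: "active_walk R (An V R Z0) Z0 w" and Z0: "Z0 = An V R {hd w, last w} \<inter> W"
  shows "active_walk R (An V R (Z \<union> {hd w, last w})) Z w"
proof -
  let ?T = "An V R {hd w, last w}"
  have An_Z0: "An V R Z0 \<subseteq> ?T" using Z0 by (auto simp: An_def intro: rtrancl_trans)
  have "active_triple R (An V R (Z \<union> {hd w, last w})) Z (a, b, c)"
    if t: "(a, b, c) \<in> set (triples w)" for a b c
  proof -
    have act_t: "active_triple R (An V R Z0) Z0 (a, b, c)" using act t unfolding active_walk_def by blast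
    show ?thesis
    proof (cases "(a, b) \<in> R \<and> (c, b) \<in> R")
      case True
      then show ?thesis using act_t An_Z0 by (auto simp: An_def)
    next
      case False
      have "b \<in> V" using active_walk_triple_adjacent(1)[OF act t] RV by (auto simp: adjacent_def)
      then have "b \<in> ?T"
        using active_walk_noncollider_reach[OF act t False] An_Z0 by (auto simp: An_def intro: rtrancl_trans)
      then have "b \<notin> Z" using act_t False Z0 \<open>Z \<subseteq> W\<close> by auto
      then show ?thesis using False by auto
    qed
  qed
  then show ?thesis using act by (auto simp: active_walk_def)
qed

theorem d_separated_An_Int:
  assumes acy: "acyclic R" and RV: "R \<subseteq> V \<times> V" and "X \<noteq> Y"
    and "Z \<subseteq> W" and sep: "d_separated V R Y X Z"
  shows "d_separated V R Y X (An V R {X, Y} \<inter> W)"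
  unfolding d_separated_def
proof
  assume "\<exists>p. is_path R p X Y \<and> active_path V R (An V R {X, Y} \<inter> W) p"
  then obtain p where "is_path R p X Y \<and> active_path V R (An V R {X, Y} \<inter> W) p" by blast
  then have p: "p \<noteq> []" "hd p = X" "last p = Y"
    "active_walk R (An V R (An V R {X, Y} \<inter> W)) (An V R {X, Y} \<inter> W) p"
    unfolding is_path_active_path_iff by auto
  moreover have "An V R {X, Y} \<inter> W = An V R {hd p, last p} \<inter> W" using p by simp
  ultimately have "active_walk R (An V R (Z \<union> {hd p, last p})) Z p"
    using active_walk_An_endpoints_Int[OF RV \<open>Z \<subseteq> W\<close>] by metis
  then obtain w where "active_walk R (An V R Z) Z w" "w \<noteq> []" "hd w = X" "last w = Y"
    using active_walk_reroute_colliders[OF acy RV] p by metis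
  then obtain q where q: "distinct q" "active_walk R (An V R Z) Z q" "q \<noteq> []" "hd q = X" "last q = Y"
    using active_walk_shorten_to_distinct[OF acy RV] by metis
  then have "2 \<le> length q" using \<open>X \<noteq> Y\<close> by (cases q rule: remdups_adj.cases) auto
  then show False using sep q by (auto simp: d_separated_def is_path_active_path_iff)
qed

lemma An_remove_out:
  assumes "X \<in> S"
  shows "An V (remove_out E X) S = An V E S"
proof -
  have "(z, s) \<in> (remove_out E X)\<^sup>* \<or> (z, X) \<in> (remove_out E X)\<^sup>*" if "(z, s) \<in> E\<^sup>*" for z s
    using that
  proof (induction rule: converse_rtrancl_induct)
    case (step y y')
    then show ?case
      by (cases "y = X") (auto simp: remove_out_def intro: converse_rtrancl_into_rtrancl)
  qed simp
  moreover have "(remove_out E X)\<^sup>* \<subseteq> E\<^sup>*" by (rule rtrancl_mono) (auto simp: remove_out_def)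
  ultimately show ?thesis using assms unfolding An_def by blast
qed

theorem lemma1:
  fixes V Obs Lat Pa :: "'v set" and E :: "('v \<times> 'v) set" and X Y :: 'v
  assumes "is_dag V E"
    and "V = Obs \<union> Lat" and "Obs \<inter> Lat = {}"
    and "X \<in> Obs" and "Y \<in> V" and "X \<noteq> Y"
    and "Pa \<subseteq> Obs - De V E {X}"
    and "\<exists>Z'. pi_backdoor_admissible V E Pa X Y Z'"
  shows "pi_backdoor_admissible V E Pa X Y (An V E {X, Y} \<inter> Pa)"
proof -
  have "remove_out E X \<subseteq> E" by (auto simp: remove_out_def)
  then have acy: "acyclic (remove_out E X)" and RV: "remove_out E X \<subseteq> V \<times> V"
    using assms(1) by (auto simp: is_dag_def intro: acyclic_subset)
  obtain Z where "Z \<subseteq> Pa" "d_separated V (remove_out E X) Y X Z"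
    using assms(8) by (auto simp: pi_backdoor_admissible_def)
  then have "d_separated V (remove_out E X) Y X (An V (remove_out E X) {X, Y} \<inter> Pa)"
    using d_separated_An_Int[OF acy RV \<open>X \<noteq> Y\<close>] by blast
  then show ?thesis by (simp add: pi_backdoor_admissible_def An_remove_out)
qed

end
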